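(* Let $d\geq 2$ be even and $E,F\subset\mathbb F_q^d$ with $|E||F|\geq 16q^d$. Then $$(|E||F|-\nu(0))^2\geq \frac{|E|^2|F|^2}{36}$$ and $$q^{3d}\Big|\sum_{m\in S_0}\overline{\widehat E(m)}\widehat F(m)\Big|^2-\nu^2(0)\leq q^{-1}|E|^2|F|^2.$$
   Context: $\mathbb F_q$ is a finite field of characteristic greater than two, and $\chi$ is a fixed nontrivial additive character of $\mathbb F_q$. For $f:\mathbb F_q^d\to\mathbb C$, $\widehat f(m)=q^{-d}\sum_{x\in\mathbb F_q^d}\chi(-m\cdot x)f(x)$; sets are identified with their indicator functions. For $m\in\mathbb F_q^d$, $\|m\|=m_1^2+\dots+m_d^2$; $S_0=\{x\in\mathbb F_q^d:\|x\|=0\}$. $\nu(0)=|\{(x,y)\in E\times F:\|x-y\|=0\}|$. *)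

theory Defs
  imports "HOL-Analysis.Analysis"
begin

text \<open>Dot product on F_q^d, vectors indexed by a finite type 'n (d = CARD('n)).\<close>
definition vdot :: "'a::comm_ring_1 ^ 'n \<Rightarrow> 'a ^ 'n \<Rightarrow> 'a" where
  "vdot m x = (\<Sum>i\<in>UNIV. m $ i * x $ i)"

text \<open>Quadratic form \<open>\<parallel>m\<parallel> = m_1^2 + ... + m_d^2\<close> (not a norm).\<close>
definition qnorm :: "'a::comm_ring_1 ^ 'n \<Rightarrow> 'a" where
  "qnorm m = (\<Sum>i\<in>UNIV. (m $ i)^2)"

definition nontriv_add_char :: "('a::{finite,field} \<Rightarrow> complex) \<Rightarrow> bool" where
  "nontriv_add_char psi \<longleftrightarrow> (\<forall>x y. psi (x + y) = psi x * psi y) \<and> (\<exists>x. psi x \<noteq> 1)"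

definition fourier :: "('a::{finite,field} \<Rightarrow> complex) \<Rightarrow> ('a ^ 'n \<Rightarrow> complex) \<Rightarrow> 'a ^ 'n \<Rightarrow> complex" where
  "fourier psi f m = (1 / of_nat (CARD('a) ^ CARD('n))) * (\<Sum>x\<in>UNIV. psi (- vdot m x) * f x)"

definition ind :: "'b set \<Rightarrow> 'b \<Rightarrow> complex" where
  "ind A x = (if x \<in> A then 1 else 0)"

definition S0 :: "('a::{finite,field} ^ 'n) set" where
  "S0 = {x. qnorm x = 0}"

definition nu0 :: "('a::{finite,field} ^ 'n) set \<Rightarrow> ('a ^ 'n) set \<Rightarrow> nat" where
  "nu0 E F = card {(x, y). x \<in> E \<and> y \<in> F \<and> qnorm (x - y) = 0}"

end

theory Submission
  imports Defs
begin

text \<open>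
  Write \<open>q\<close> for the size of the field and \<open>d\<close> for the dimension. The indicator of \<open>qnorm z = 0\<close>
  is \<open>1/q\<close> times the sum of \<open>psi (s * qnorm z)\<close> over all \<open>s\<close>; for \<open>s \<noteq> 0\<close> the function
  \<open>z \<mapsto> psi (s * qnorm z)\<close> is expanded in a Fourier series by completing the square, and its
  coefficients are multiples of the Gauss sum \<open>G\<close>, the sum of \<open>psi (qnorm w)\<close> over all \<open>w\<close>.
  In even dimension \<open>G\<close> is real with \<open>G\<^sup>2 = q\<^sup>d\<close>, since \<open>qnorm\<close> is similar to each of its nonzero
  multiples (every field element is a sum of two squares). Summing over \<open>E \<times> F\<close> yields the exact
  identity
    \<open>\<nu>(0) - (|E||F| - G |E \<inter> F|) / q = G q\<^sup>-\<^sup>d \<Sum>\<^bsub>m \<in> S0\<^esub> e\<^sub>E(m) cnj(e\<^sub>F(m))\<close>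
  with \<open>e\<^sub>A(m) = \<Sum>\<^bsub>x \<in> A\<^esub> psi (m \<cdot> x)\<close>. The square of the right-hand side is the quantity
  \<open>q\<^sup>3\<^sup>d |\<Sum>\<^bsub>m \<in> S0\<^esub> cnj (fourier psi (ind E) m) * fourier psi (ind F) m|\<^sup>2\<close> of the
  theorem, and by Cauchy--Schwarz and Parseval it is at most \<open>q\<^sup>d |E||F|\<close>. Under \<open>|E||F| \<ge> 16 q\<^sup>d\<close> both estimates then follow by
  elementary arithmetic.
\<close>

lemma vdot_commute: "vdot m x = vdot x m"
  by (simp add: vdot_def mult.commute)

lemma vdot_add_right: "vdot m (x + y) = vdot m x + vdot m y"
  by (simp add: vdot_def distrib_left sum.distrib)

lemma vdot_diff_right: "vdot m (x - y) = vdot m x - vdot m (y :: 'a::comm_ring_1 ^ 'n)"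
  by (simp add: vdot_def right_diff_distrib sum_subtractf)

lemma vdot_smult_left: "vdot (c *s m) x = c * vdot m x"
  by (simp add: vdot_def sum_distrib_left mult.assoc)

lemma vdot_smult_right: "vdot x (c *s m) = c * vdot x m"
  by (simp add: vdot_def sum_distrib_left mult.left_commute)

lemma vdot_self: "vdot m m = qnorm m"
  by (simp add: vdot_def qnorm_def power2_eq_square)

lemma qnorm_add: "qnorm (x + y) = qnorm x + 2 * vdot x y + qnorm (y :: 'a::comm_ring_1 ^ 'n)"
  by (simp add: qnorm_def vdot_def power2_eq_square algebra_simps sum.distrib sum_distrib_left)

lemma qnorm_smult: "qnorm (c *s m) = c^2 * qnorm m"
  by (simp add: qnorm_def sum_distrib_left power_mult_distrib)

lemma two_neq_zero_if_CHAR_gt_2: "CHAR('a::semiring_1) > 2 \<Longrightarrow> (2::'a) \<noteq> 0"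
  by (metis of_nat_numeral of_nat_eq_0_iff_char_dvd dvd_imp_le zero_less_numeral not_le)

lemma card_ge_3_if_CHAR_gt_2:
  assumes "CHAR('a::{finite,field}) > 2"
  shows "CARD('a) \<ge> 3"
proof -
  have "card {0, 1, 2::'a} = 3"
    using two_neq_zero_if_CHAR_gt_2[OF assms]
    by (simp add: card_insert_if) (metis one_add_one add_cancel_left_right zero_neq_one)
  thus ?thesis by (metis card_mono finite subset_UNIV)
qed

lemma card_squares: "CARD('a) + 1 \<le> 2 * card (range (\<lambda>t::'a::{finite,field}. t^2))"
proof -
  let ?Q = "range (\<lambda>t::'a. t^2)"
  have fibre: "card {t. t^2 = u} \<le> 2" if "u \<in> ?Q" for u
  proof -
    obtain r where r: "u = r^2" using \<open>u \<in> ?Q\<close> by auto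
    have "{t. t^2 = u} \<subseteq> {r, -r}"
      using r by (auto simp: power2_eq_iff)
    hence "card {t. t^2 = u} \<le> card {r, -r}" by (intro card_mono) auto
    also have "\<dots> \<le> 2" by (simp add: card_insert_if)
    finally show ?thesis .
  qed
  have "UNIV = (\<Union>u\<in>?Q. {t. t^2 = u})" by auto
  hence "CARD('a) \<le> (\<Sum>u\<in>?Q. card {t::'a. t^2 = u})" by (metis card_UN_le finite)
  also have "\<dots> = card {t::'a. t^2 = 0} + (\<Sum>u\<in>?Q - {0}. card {t::'a. t^2 = u})"
    by (subst sum.remove[of _ 0]) auto
  also have "\<dots> \<le> 1 + (\<Sum>u\<in>?Q - {0}. 2)"
    using fibre by (intro add_mono sum_mono) auto
  also have "\<dots> = 1 + 2 * (card ?Q - 1)" by simp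
  finally show ?thesis by (cases "card ?Q") auto
qed

text \<open>More than half of the field are squares, so the squares and the translates \<open>s - t\<^sup>2\<close> meet.\<close>
lemma sum_of_two_squares: "\<exists>a b::'a::{finite,field}. a^2 + b^2 = s"
proof (rule ccontr)
  assume none: "\<not> ?thesis"
  let ?Q = "range (\<lambda>t::'a. t^2)"
  have "?Q \<inter> (\<lambda>u. s - u) ` ?Q = {}" using none by (auto simp: algebra_simps)
  hence "card ?Q + card ((\<lambda>u. s - u) ` ?Q) \<le> CARD('a)"
    by (metis card_Un_disjoint finite card_mono subset_UNIV)
  moreover have "card ((\<lambda>u. s - u) ` ?Q) = card ?Q" by (rule card_image) (auto simp: inj_on_def)
  ultimately show False using card_squares[where 'a='a] by simp
qed

lemma ex_fixpoint_free_involution: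
  assumes "even CARD('n)"
  obtains \<sigma> :: "'n::finite \<Rightarrow> 'n" and P :: "'n set"
  where "\<And>i. \<sigma> (\<sigma> i) = i" and "\<And>i. \<sigma> i \<in> P \<longleftrightarrow> i \<notin> P"
proof -
  obtain h where h: "bij_betw h {0..<CARD('n)} (UNIV :: 'n set)"
    using ex_bij_betw_nat_finite[of "UNIV :: 'n set"] by auto
  define k where "k = inv_into {0..<CARD('n)} h"
  have hk: "h (k i) = i" for i
    using h by (simp add: k_def bij_betw_inv_into_right)
  have kh: "j < CARD('n) \<Longrightarrow> k (h j) = j" for j
    using h by (simp add: k_def bij_betw_inv_into_left)
  have k_less: "k i < CARD('n)" for i
    using h by (metis atLeastLessThan_iff bij_betw_def inv_into_into k_def UNIV_I)
  define partner where "partner j = (if even j then j + 1 else j - 1)" for j :: nat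
  have partner_less: "partner (k i) < CARD('n)" for i
    using k_less[of i] assms unfolding partner_def by presburger
  have partner_partner: "partner (partner j) = j" for j
    unfolding partner_def by presburger
  have even_partner: "even (partner j) \<longleftrightarrow> odd j" for j
    unfolding partner_def by presburger
  show ?thesis
  proof (rule that[of "\<lambda>i. h (partner (k i))" "{i. even (k i)}"])
    show "h (partner (k (h (partner (k i))))) = i" for i
      by (simp only: kh[OF partner_less] partner_partner hk)
    show "h (partner (k i)) \<in> {i. even (k i)} \<longleftrightarrow> i \<notin> {i. even (k i)}" for i
      by (simp add: kh[OF partner_less] even_partner)
  qed
qed

text \<open>The cross terms \<open>e i * x $ i * x $ \<sigma> i\<close> cancel in pairs because \<open>e\<close> changes sign along \<open>\<sigma>\<close>.\<close>
lemma qnorm_pair_rotation: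
  fixes x :: "'a::comm_ring_1 ^ 'n"
  assumes inv: "\<And>i. \<sigma> (\<sigma> i) = i" and P: "\<And>i. \<sigma> i \<in> P \<longleftrightarrow> i \<notin> P"
  defines "e \<equiv> \<lambda>i. if i \<in> P then 1 else - 1 :: 'a"
  shows "qnorm (\<chi> i. a * x $ i + b * e i * x $ \<sigma> i) = (a^2 + b^2) * qnorm x"
proof -
  have e_sq: "(e i)^2 = 1" for i by (simp add: e_def)
  have e_swap: "e (\<sigma> i) = - e i" for i using P[of i] by (simp add: e_def)
  have reindex: "(\<Sum>i\<in>UNIV. g (\<sigma> i)) = (\<Sum>i\<in>UNIV. g i)" for g :: "'n \<Rightarrow> 'a"
    by (rule sum.reindex_bij_witness[of _ \<sigma> \<sigma>]) (auto simp: inv)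
  define S where "S = (\<Sum>i\<in>UNIV. e i * x $ i * x $ \<sigma> i)"
  have "S = (\<Sum>i\<in>UNIV. e (\<sigma> i) * x $ \<sigma> i * x $ \<sigma> (\<sigma> i))"
    unfolding S_def by (rule reindex[symmetric])
  also have "\<dots> = - S" by (simp add: S_def e_swap inv sum_negf mult.commute mult.left_commute)
  finally have "S = - S" .
  hence S: "2 * S = 0" by (metis add.right_inverse mult_2)
  have expand: "(a * x $ i + b * e i * x $ \<sigma> i)^2
      = a^2 * (x $ i)^2 + b^2 * (x $ \<sigma> i)^2 + a * b * (2 * (e i * x $ i * x $ \<sigma> i))" for i
  proof -
    have "(a * x $ i + b * e i * x $ \<sigma> i)^2
        = a^2 * (x $ i)^2 + (e i)^2 * (b^2 * (x $ \<sigma> i)^2) + a * b * (2 * (e i * x $ i * x $ \<sigma> i))"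
      by (simp add: power2_eq_square algebra_simps)
    then show ?thesis by (simp add: e_sq)
  qed
  have "qnorm (\<chi> i. a * x $ i + b * e i * x $ \<sigma> i)
      = (\<Sum>i\<in>UNIV. a^2 * (x $ i)^2 + b^2 * (x $ \<sigma> i)^2 + a * b * (2 * (e i * x $ i * x $ \<sigma> i)))"
    unfolding qnorm_def by (simp only: vec_lambda_beta expand)
  also have "\<dots> = a^2 * qnorm x + b^2 * (\<Sum>i\<in>UNIV. (x $ \<sigma> i)^2) + a * b * (2 * S)"
    by (simp only: sum.distrib sum_distrib_left[symmetric] qnorm_def S_def)
  also have "(\<Sum>i\<in>UNIV. (x $ \<sigma> i)^2) = qnorm x"
    unfolding qnorm_def by (rule reindex)
  finally show ?thesis by (simp add: S distrib_right)
qed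

text \<open>Writing \<open>s = a\<^sup>2 + b\<^sup>2\<close>, the witness acts on each coordinate pair \<open>{i, \<sigma> i}\<close> as
  multiplication by \<open>a \<pm> b \<i>\<close>; composed with the conjugate map it is multiplication by \<open>s\<close>.\<close>
lemma ex_qnorm_similitude:
  fixes s :: "'a::{finite,field}"
  assumes "even CARD('n)" and "s \<noteq> 0"
  obtains M :: "'a ^ 'n \<Rightarrow> 'a ^ 'n" where "bij M" and "\<And>x. qnorm (M x) = s * qnorm x"
proof -
  obtain a b :: 'a where ab: "a^2 + b^2 = s" using sum_of_two_squares by blast
  obtain \<sigma> :: "'n \<Rightarrow> 'n" and P where inv: "\<And>i. \<sigma> (\<sigma> i) = i" and P: "\<And>i. \<sigma> i \<in> P \<longleftrightarrow> i \<notin> P"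
    using ex_fixpoint_free_involution[OF assms(1)] by blast
  define e where "e i = (if i \<in> P then 1 else - 1 :: 'a)" for i
  define M where "M c x = (\<chi> i. a * x $ i + c * e i * x $ \<sigma> i)" for c x
  have qnorm_M: "qnorm (M c x) = (a^2 + c^2) * qnorm x" for c x
    unfolding M_def e_def by (rule qnorm_pair_rotation[OF inv P])
  have Minv: "M (- b) (M b x) = s *s x" for x
  proof -
    have "e i * e (\<sigma> i) = - 1" for i using P[of i] by (simp add: e_def)
    then show ?thesis
      by (simp add: vec_eq_iff M_def inv ab[symmetric] power2_eq_square algebra_simps)
  qed
  have "inj (M b)"
  proof (rule injI)
    fix x y assume "M b x = M b y"
    then have "s *s x = s *s y" using Minv by metis
    then show "x = y" using assms(2) by (simp add: vec_eq_iff)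
  qed
  hence "bij (M b)" by (simp add: bij_def finite_UNIV_inj_surj)
  with qnorm_M[of b] ab that show ?thesis by blast
qed

lemma sum_qnorm_scale:
  fixes f :: "'a::{finite,field} \<Rightarrow> 'b::comm_monoid_add"
  assumes "even CARD('n)" and "s \<noteq> 0"
  shows "(\<Sum>x\<in>(UNIV :: ('a ^ 'n) set). f (s * qnorm x)) = (\<Sum>x\<in>(UNIV :: ('a ^ 'n) set). f (qnorm x))"
proof -
  obtain M :: "'a ^ 'n \<Rightarrow> 'a ^ 'n" where M: "bij M" "\<And>x. qnorm (M x) = s * qnorm x"
    using ex_qnorm_similitude[OF assms] by blast
  show ?thesis
    using sum.reindex_bij_betw[OF M(1), of "\<lambda>y. f (qnorm y)"] by (simp add: M(2))
qed

lemma nu0_eq_sum: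
  fixes E F :: "('a::{finite,field} ^ 'n) set"
  shows "nu0 E F = (\<Sum>x\<in>E. \<Sum>y\<in>F. if qnorm (x - y) = 0 then 1 else 0)"
proof -
  have "nu0 E F = card {p \<in> E \<times> F. qnorm (fst p - snd p) = 0}"
    unfolding nu0_def by (rule arg_cong[where f = card]) auto
  also have "\<dots> = (\<Sum>p\<in>{p \<in> E \<times> F. qnorm (fst p - snd p) = 0}. 1)" by simp
  also have "\<dots> = (\<Sum>p\<in>E \<times> F. if qnorm (fst p - snd p) = 0 then 1 else 0)"
    by (subst sum.inter_filter) auto
  finally show ?thesis by (simp add: sum.cartesian_product case_prod_unfold)
qed

lemma estimates_from_deviation:
  fixes nu X t q :: real
  assumes r: "\<bar>nu - (X - t) / q\<bar> \<le> X / 4" and t: "\<bar>t\<bar> \<le> X / 4"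
    and q: "q \<ge> 3" and nu: "nu \<ge> 0"
  shows "(X - nu)^2 \<ge> X^2 / 36" and "(nu - (X - t) / q)^2 - nu^2 \<le> X^2 / q"
proof -
  define c where "c = (X - t) / q"
  have X: "X \<ge> 0" using t by linarith
  have c0: "c \<ge> 0" using t q by (simp add: c_def)
  have "c \<le> (5 / 4 * X) / q" unfolding c_def using t q by (intro divide_right_mono) auto
  also have "\<dots> \<le> (5 / 4 * X) / 3" using q X by (intro divide_left_mono) auto
  finally have c1: "c \<le> 5 / 12 * X" by simp
  have "X / 6 \<le> X - nu" using r c1 unfolding c_def[symmetric] by linarith
  hence "(X / 6)^2 \<le> (X - nu)^2" using X by (intro power_mono) auto
  thus "(X - nu)^2 \<ge> X^2 / 36" by (simp add: power2_eq_square)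
  have "(nu - c)^2 - nu^2 = c^2 - 2 * nu * c" by (simp add: power2_eq_square algebra_simps)
  also have "\<dots> \<le> c^2" using nu c0 by simp
  also have "\<dots> \<le> ((5 / 4 * X) / q)^2"
    using c0 \<open>c \<le> (5 / 4 * X) / q\<close> by (intro power_mono) auto
  also have "\<dots> = X^2 / q * (25 / 16 / q)" by (simp add: power2_eq_square)
  also have "\<dots> \<le> X^2 / q" using q by (intro mult_left_le) auto
  finally show "(nu - (X - t) / q)^2 - nu^2 \<le> X^2 / q" by (simp add: c_def)
qed

locale add_character =
  fixes psi :: "'a::{finite,field} \<Rightarrow> complex"
  assumes psi_add: "psi (x + y) = psi x * psi y"
    and psi_zero: "psi 0 = 1"
    and psi_nontrivial: "\<exists>x. psi x \<noteq> 1"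
begin

lemma psi_neg_mult: "psi (- x) * psi x = 1"
  by (metis psi_add psi_zero add.left_inverse)

lemma psi_diff: "psi (x - y) = psi x * psi (- y)"
  by (metis psi_add diff_conv_add_uminus)

lemma psi_of_nat_mult: "psi (of_nat n * x) = psi x ^ n"
  by (induction n) (auto simp: psi_zero psi_add distrib_right)

lemma norm_psi: "cmod (psi x) = 1"
proof -
  have "psi x ^ CHAR('a) = 1"
    using psi_of_nat_mult[of "CHAR('a)" x] psi_zero by simp
  hence "cmod (psi x) ^ CHAR('a) = 1" by (metis norm_one norm_power)
  moreover have "CHAR('a) > 0" by (rule finite_imp_CHAR_pos) simp
  ultimately show ?thesis using power_eq_imp_eq_base[of "cmod (psi x)" _ 1] by simp
qed

lemma cnj_psi: "cnj (psi x) = psi (- x)"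
proof -
  have "cnj (psi x) * psi x = 1"
    using norm_psi[of x] by (metis complex_norm_square mult.commute of_real_1 power_one)
  moreover have "psi x \<noteq> 0" using norm_psi[of x] by auto
  ultimately show ?thesis using psi_neg_mult[of x] by (metis mult_right_cancel)
qed

text \<open>Translation by \<open>y\<close> multiplies the sum by \<open>psi (L y) \<noteq> 1\<close>.\<close>
lemma sum_psi_additive_eq_0:
  fixes L :: "'b::{finite,group_add} \<Rightarrow> 'a"
  assumes L: "\<And>x y. L (x + y) = L x + L y" and y: "psi (L y) \<noteq> 1"
  shows "(\<Sum>x\<in>UNIV. psi (L x)) = 0"
proof -
  let ?S = "\<Sum>x\<in>UNIV. psi (L x)"
  have "?S = (\<Sum>x\<in>UNIV. psi (L (x + y)))"
    by (rule sum.reindex_bij_witness[of _ "\<lambda>x. x + y" "\<lambda>x. x - y"]) auto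
  also have "\<dots> = psi (L y) * ?S"
    by (simp add: L psi_add sum_distrib_left mult.commute)
  finally have "(1 - psi (L y)) * ?S = 0" by (simp add: algebra_simps)
  with y show ?thesis by simp
qed

lemma sum_psi_mult: "(\<Sum>s\<in>UNIV. psi (s * c)) = (if c = 0 then of_nat CARD('a) else 0)"
proof (cases "c = 0")
  case False
  obtain t where "psi t \<noteq> 1" using psi_nontrivial by blast
  hence "psi (t / c * c) \<noteq> 1" using False by simp
  then show ?thesis
    using sum_psi_additive_eq_0[of "\<lambda>s. s * c" "t / c"] False by (simp add: distrib_right)
qed (simp add: psi_zero)

lemma sum_psi: "(\<Sum>s\<in>UNIV. psi s) = 0"
  using sum_psi_mult[of 1] by simp

lemma sum_psi_vdot:
  fixes m :: "'a ^ 'n"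
  shows "(\<Sum>x\<in>UNIV. psi (vdot m x)) = (if m = 0 then of_nat CARD('a ^ 'n) else 0)"
proof (cases "m = 0")
  case False
  then obtain i where i: "m $ i \<noteq> 0" by (metis vec_eq_iff zero_index)
  obtain t where t: "psi t \<noteq> 1" using psi_nontrivial by blast
  define y :: "'a ^ 'n" where "y = (\<chi> j. if j = i then t / m $ i else 0)"
  have "vdot m y = t" using i by (simp add: vdot_def y_def if_distrib cong: if_cong)
  then show ?thesis
    using sum_psi_additive_eq_0[of "vdot m" y] t False by (simp add: vdot_add_right)
qed (simp add: vdot_def psi_zero)

lemma sum_psi_vdot_left:
  fixes z :: "'a ^ 'n"
  shows "(\<Sum>m\<in>UNIV. psi (vdot m z)) = (if z = 0 then of_nat CARD('a ^ 'n) else 0)"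
  by (simp only: vdot_commute[of _ z] sum_psi_vdot)

lemma gauss_sum_mult_neg:
  assumes "CHAR('a) > 2"
  shows "(\<Sum>w\<in>(UNIV :: ('a ^ 'n) set). psi (qnorm w)) * (\<Sum>w\<in>(UNIV :: ('a ^ 'n) set). psi (- qnorm w))
         = of_nat CARD('a ^ 'n)"
proof -
  have two: "(2::'a) \<noteq> 0" by (rule two_neq_zero_if_CHAR_gt_2[OF assms])
  have "(\<Sum>w\<in>(UNIV :: ('a ^ 'n) set). psi (qnorm w)) * (\<Sum>w\<in>(UNIV :: ('a ^ 'n) set). psi (- qnorm w))
      = (\<Sum>y\<in>UNIV. \<Sum>x\<in>UNIV. psi (qnorm (x :: 'a ^ 'n) - qnorm (y :: 'a ^ 'n)))"
    unfolding sum_product by (subst sum.swap) (simp add: psi_diff)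
  also have "\<dots> = (\<Sum>y\<in>UNIV. \<Sum>u\<in>UNIV. psi (qnorm (y + u) - qnorm (y :: 'a ^ 'n)))"
  proof (rule sum.cong[OF refl])
    fix y :: "'a ^ 'n"
    show "(\<Sum>x\<in>UNIV. psi (qnorm (x :: 'a ^ 'n) - qnorm y)) = (\<Sum>u\<in>UNIV. psi (qnorm (y + u) - qnorm y))"
      by (rule sum.reindex_bij_witness[of _ "\<lambda>u. y + u" "\<lambda>x. x - y"]) auto
  qed
  also have "\<dots> = (\<Sum>y\<in>UNIV. \<Sum>u\<in>UNIV. psi (qnorm u) * psi (vdot (2 *s u) (y :: 'a ^ 'n)))"
    by (simp add: qnorm_add psi_add vdot_smult_left vdot_smult_right vdot_commute mult.commute)
  also have "\<dots> = (\<Sum>u\<in>UNIV. psi (qnorm u) * (\<Sum>y\<in>UNIV. psi (vdot (2 *s u) (y :: 'a ^ 'n))))"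
    by (subst sum.swap) (simp add: sum_distrib_left)
  also have "\<dots> = (\<Sum>u\<in>(UNIV :: ('a ^ 'n) set). if u = 0 then of_nat CARD('a ^ 'n) else 0)"
  proof -
    have two_smult: "2 *s u = 0 \<longleftrightarrow> u = 0" for u :: "'a ^ 'n" by (simp add: vec_eq_iff two)
    show ?thesis by (intro sum.cong refl) (auto simp: two two_smult sum_psi_vdot psi_zero qnorm_def)
  qed
  finally show ?thesis by simp
qed

lemma gauss_sum_square:
  assumes "CHAR('a) > 2" and "even CARD('n)"
  shows "(\<Sum>w\<in>(UNIV :: ('a ^ 'n) set). psi (qnorm w))^2 = of_nat CARD('a ^ 'n)"
  using gauss_sum_mult_neg[OF assms(1), where 'n='n]
    sum_qnorm_scale[OF assms(2), of "- 1" psi]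
  by (simp add: power2_eq_square)

lemma gauss_sum_real:
  assumes "CHAR('a) > 2" and "even CARD('n)"
  obtains \<tau> :: real
  where "(\<Sum>w\<in>(UNIV :: ('a ^ 'n) set). psi (qnorm w)) = of_real \<tau>" and "\<tau>^2 = real CARD('a ^ 'n)"
proof -
  let ?T = "\<Sum>w\<in>(UNIV :: ('a ^ 'n) set). psi (qnorm w)"
  let ?r = "sqrt (real CARD('a ^ 'n))"
  have "(of_real ?r :: complex)^2 = of_nat CARD('a ^ 'n)"
    by (metis of_real_of_nat_eq of_real_power real_sqrt_pow2 of_nat_0_le_iff)
  hence "?T^2 = (of_real ?r)^2" by (simp only: gauss_sum_square[OF assms])
  hence "?T = of_real ?r \<or> ?T = of_real (- ?r)" by (simp add: power2_eq_iff)
  with that show ?thesis by fastforce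
qed

lemma sum_psi_complete_square:
  fixes m :: "'a ^ 'n"
  assumes "CHAR('a) > 2" and s: "s \<noteq> 0"
  shows "(\<Sum>w\<in>UNIV. psi (s * qnorm w - vdot m w))
         = (\<Sum>w\<in>(UNIV :: ('a ^ 'n) set). psi (s * qnorm w)) * psi (- (qnorm m / (4 * s)))"
proof -
  have two: "(2::'a) \<noteq> 0" by (rule two_neq_zero_if_CHAR_gt_2[OF assms(1)])
  have four: "(4::'a) \<noteq> 0" using two by (metis mult_2_right numeral_Bit0 mult_eq_0_iff)
  define c where "c = 1 / (2 * s)"
  define v where "v = c *s m"
  have sc: "s * c = 1 / 2" using s by (simp add: c_def)
  have c_sc: "c * (s * c - 1) = - (1 / (4 * s))"
    unfolding sc using two four s by (simp add: c_def field_simps)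
  have "s * qnorm (u + v) - vdot m (u + v)
      = s * qnorm u + (2 * (s * c) - 1) * vdot m u + c * (s * c - 1) * qnorm m" for u
    by (simp add: v_def qnorm_add vdot_add_right vdot_smult_left vdot_smult_right qnorm_smult
        vdot_commute[of u] vdot_self algebra_simps power2_eq_square)
  also have "\<dots> u = s * qnorm u + - (qnorm m / (4 * s))" for u
    using two by (simp only: c_sc, simp add: sc)
  finally have shift: "s * qnorm (u + v) - vdot m (u + v) = s * qnorm u + - (qnorm m / (4 * s))" for u .
  have "(\<Sum>w\<in>UNIV. psi (s * qnorm w - vdot m w))
      = (\<Sum>u\<in>UNIV. psi (s * qnorm (u + v) - vdot m (u + v)))"
    by (rule sum.reindex_bij_witness[of _ "\<lambda>u. u + v" "\<lambda>w. w - v"]) auto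
  also have "\<dots> = (\<Sum>u\<in>UNIV. psi (s * qnorm (u :: 'a ^ 'n)) * psi (- (qnorm m / (4 * s))))"
    by (simp only: shift psi_add)
  finally show ?thesis by (simp add: sum_distrib_right)
qed

text \<open>Fourier inversion of \<open>w \<mapsto> psi (s * qnorm w)\<close>, whose coefficients are computed by
  \<open>sum_psi_complete_square\<close>.\<close>
lemma psi_qnorm_expansion:
  fixes z :: "'a ^ 'n"
  assumes c: "CHAR('a) > 2" and ev: "even CARD('n)" and s: "s \<noteq> 0"
  shows "psi (s * qnorm z) = (\<Sum>w\<in>(UNIV :: ('a ^ 'n) set). psi (qnorm w)) / of_nat CARD('a ^ 'n)
           * (\<Sum>m\<in>UNIV. psi (vdot m z) * psi (- (qnorm m / (4 * s))))"
proof -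
  let ?N = "of_nat CARD('a ^ 'n) :: complex"
  have twist: "psi (vdot m z) * psi (s * qnorm w - vdot m w) = psi (s * qnorm w) * psi (vdot m (z - w))"
    for m w :: "'a ^ 'n"
  proof -
    have "s * qnorm w - vdot m w + vdot m z = s * qnorm w + vdot m (z - w)"
      by (simp add: vdot_diff_right)
    then show ?thesis by (metis psi_add mult.commute)
  qed
  have "(\<Sum>w\<in>(UNIV :: ('a ^ 'n) set). psi (qnorm w)) * (\<Sum>m\<in>UNIV. psi (vdot m z) * psi (- (qnorm m / (4 * s))))
      = (\<Sum>m\<in>UNIV. psi (vdot m z) * (\<Sum>w\<in>UNIV. psi (s * qnorm w - vdot m w)))"
    by (simp add: sum_psi_complete_square[OF c s] sum_qnorm_scale[OF ev s] sum_distrib_left mult_ac)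
  also have "\<dots> = (\<Sum>m\<in>UNIV. \<Sum>w\<in>UNIV. psi (s * qnorm w) * psi (vdot m (z - w)))"
    by (simp add: sum_distrib_left twist)
  also have "\<dots> = (\<Sum>w\<in>UNIV. psi (s * qnorm w) * (\<Sum>m\<in>UNIV. psi (vdot m (z - w))))"
    by (subst sum.swap) (simp add: sum_distrib_left)
  also have "\<dots> = psi (s * qnorm z) * ?N"
    by (simp add: sum_psi_vdot_left if_distrib cong: if_cong)
  finally show ?thesis by (simp add: field_simps)
qed

lemma sum_psi_inverse_nonzero:
  assumes "CHAR('a) > 2"
  shows "(\<Sum>s\<in>UNIV - {0}. psi (- (Q / (4 * s)))) = (if Q = 0 then of_nat CARD('a) - 1 else - 1)"
proof (cases "Q = 0")
  case True
  then show ?thesis by (simp add: psi_zero card_Diff_subset of_nat_diff)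
next
  case False
  have four: "(4::'a) \<noteq> 0"
    using two_neq_zero_if_CHAR_gt_2[OF assms] by (metis mult_2_right numeral_Bit0 mult_eq_0_iff)
  have "(\<Sum>s\<in>UNIV - {0}. psi (- (Q / (4 * s)))) = (\<Sum>t\<in>UNIV - {0}. psi t)"
    by (rule sum.reindex_bij_witness[of _ "\<lambda>t. - (Q / (4 * t))" "\<lambda>s. - (Q / (4 * s))"])
      (use False four in \<open>auto simp: field_simps\<close>)
  also have "\<dots> = - 1" by (simp add: sum_diff1 sum_psi psi_zero)
  finally show ?thesis using False by simp
qed

lemma isotropic_indicator_expansion:
  fixes z :: "'a ^ 'n"
  assumes "CHAR('a) > 2" and "even CARD('n)"
  defines "T \<equiv> \<Sum>w\<in>(UNIV :: ('a ^ 'n) set). psi (qnorm w)"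
    and "N \<equiv> of_nat CARD('a ^ 'n) :: complex"
  shows "of_nat CARD('a) * (if qnorm z = 0 then 1 else 0)
         = 1 + T / N * (of_nat CARD('a) * (\<Sum>m\<in>S0. psi (vdot m z)) - (if z = 0 then N else 0))"
proof -
  let ?q = "of_nat CARD('a) :: complex"
  have "?q * (if qnorm z = 0 then 1 else 0) = (\<Sum>s\<in>UNIV. psi (s * qnorm z))"
    by (simp add: sum_psi_mult)
  also have "\<dots> = 1 + (\<Sum>s\<in>UNIV - {0}. psi (s * qnorm z))"
    by (simp add: sum.remove[of UNIV 0] psi_zero)
  also have "(\<Sum>s\<in>UNIV - {0}. psi (s * qnorm z))
      = (\<Sum>s\<in>UNIV - {0}. T / N * (\<Sum>m\<in>UNIV. psi (vdot m z) * psi (- (qnorm m / (4 * s)))))"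
    by (intro sum.cong refl) (simp add: psi_qnorm_expansion[OF assms(1,2)] T_def N_def)
  also have "\<dots> = T / N * (\<Sum>m\<in>UNIV. psi (vdot m z) * (\<Sum>s\<in>UNIV - {0}. psi (- (qnorm m / (4 * s)))))"
    by (simp add: sum_distrib_left sum.swap[of _ "UNIV - {0}"])
  also have "\<dots> = T / N * (\<Sum>m\<in>UNIV. psi (vdot m z) * (if qnorm m = 0 then ?q - 1 else - 1))"
    by (simp add: sum_psi_inverse_nonzero[OF assms(1)])
  also have "(\<Sum>m\<in>UNIV. psi (vdot m z) * (if qnorm m = 0 then ?q - 1 else - 1))
      = ?q * (\<Sum>m\<in>S0. psi (vdot m z)) - (\<Sum>m\<in>UNIV. psi (vdot m z))"
  proof -
    have "(\<Sum>m\<in>UNIV. psi (vdot m z) * (if qnorm m = 0 then ?q - 1 else - 1))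
        = (\<Sum>m\<in>UNIV. (if qnorm m = 0 then ?q * psi (vdot m z) else 0) - psi (vdot m z))"
      by (intro sum.cong refl) (simp add: algebra_simps)
    then show ?thesis by (simp add: sum_subtractf sum.If_cases S0_def sum_distrib_left)
  qed
  also have "(\<Sum>m\<in>UNIV. psi (vdot m z)) = (if z = 0 then N else 0)"
    by (simp add: sum_psi_vdot_left N_def)
  finally show ?thesis .
qed

definition expsum :: "('a ^ 'n) set \<Rightarrow> 'a ^ 'n \<Rightarrow> complex" where
  "expsum A m = (\<Sum>x\<in>A. psi (vdot m x))"

lemma cnj_expsum: "cnj (expsum A m) = (\<Sum>x\<in>A. psi (- vdot m x))"
  by (simp add: expsum_def cnj_psi)

lemma expsum_mult_cnj: "expsum E m * cnj (expsum F m) = (\<Sum>x\<in>E. \<Sum>y\<in>F. psi (vdot m (x - y)))"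
  by (simp only: cnj_expsum) (simp add: expsum_def sum_product vdot_diff_right psi_diff)

lemma sum_sum_psi_vdot_diff:
  fixes E F :: "('a ^ 'n) set"
  shows "(\<Sum>x\<in>E. \<Sum>y\<in>F. \<Sum>m\<in>UNIV. psi (vdot m (x - y))) = of_nat CARD('a ^ 'n) * of_nat (card (E \<inter> F))"
  by (simp add: sum_psi_vdot_left sum.If_cases Int_def)

lemma parseval:
  fixes A :: "('a ^ 'n) set"
  shows "(\<Sum>m\<in>UNIV. (cmod (expsum A m))^2) = real CARD('a ^ 'n) * real (card A)"
proof -
  have "complex_of_real (\<Sum>m\<in>UNIV. (cmod (expsum A m))^2) = (\<Sum>m\<in>UNIV. expsum A m * cnj (expsum A m))"
    by (simp only: of_real_sum complex_norm_square)
  also have "\<dots> = (\<Sum>x\<in>A. \<Sum>y\<in>A. \<Sum>m\<in>UNIV. psi (vdot m (x - y)))"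
    by (simp only: expsum_mult_cnj sum.swap[of _ UNIV])
  also have "\<dots> = complex_of_real (real CARD('a ^ 'n) * real (card A))"
    by (simp only: sum_sum_psi_vdot_diff) simp
  finally show ?thesis by (simp only: of_real_eq_iff)
qed

lemma norm_sum_expsum_le:
  fixes E F :: "('a ^ 'n) set"
  shows "(cmod (\<Sum>m\<in>S. expsum E m * cnj (expsum F m)))^2
         \<le> (real CARD('a ^ 'n))^2 * (real (card E) * real (card F))"
proof -
  have "cmod (\<Sum>m\<in>S. expsum E m * cnj (expsum F m)) \<le> (\<Sum>m\<in>S. cmod (expsum E m) * cmod (expsum F m))"
    using norm_sum[of "\<lambda>m. expsum E m * cnj (expsum F m)" S] by (simp add: norm_mult)
  also have "\<dots> \<le> (\<Sum>m\<in>UNIV. cmod (expsum E m) * cmod (expsum F m))"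
    by (intro sum_mono2) auto
  finally have "(cmod (\<Sum>m\<in>S. expsum E m * cnj (expsum F m)))^2
      \<le> (\<Sum>m\<in>UNIV. cmod (expsum E m) * cmod (expsum F m))^2"
    by (intro power_mono) auto
  also have "\<dots> \<le> (\<Sum>m\<in>UNIV. (cmod (expsum E m))^2) * (\<Sum>m\<in>UNIV. (cmod (expsum F m))^2)"
    by (rule Cauchy_Schwarz_ineq_sum)
  also have "\<dots> = (real CARD('a ^ 'n))^2 * (real (card E) * real (card F))"
    by (simp only: parseval) (simp add: power2_eq_square)
  finally show ?thesis .
qed

lemma fourier_ind:
  fixes A :: "('a ^ 'n) set"
  shows "fourier psi (ind A) m = cnj (expsum A m) / of_nat CARD('a ^ 'n)"
  by (simp add: fourier_def cnj_expsum ind_def sum.If_cases if_distrib cong: if_cong)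

lemma nu0_identity:
  fixes E F :: "('a ^ 'n) set"
  assumes "CHAR('a) > 2" and "even CARD('n)"
  defines "T \<equiv> \<Sum>w\<in>(UNIV :: ('a ^ 'n) set). psi (qnorm w)"
    and "N \<equiv> of_nat CARD('a ^ 'n) :: complex"
  shows "of_nat CARD('a) * of_nat (nu0 E F)
         = of_nat (card E * card F)
           + T / N * (of_nat CARD('a) * (\<Sum>m\<in>S0. expsum E m * cnj (expsum F m)) - N * of_nat (card (E \<inter> F)))"
proof -
  let ?q = "of_nat CARD('a) :: complex"
  define A where "A x y = (\<Sum>m\<in>S0. psi (vdot m (x - y)))" for x y :: "'a ^ 'n"
  define B where "B x y = (if x - y = 0 then N else 0)" for x y :: "'a ^ 'n"
  have "?q * of_nat (nu0 E F) = (\<Sum>x\<in>E. \<Sum>y\<in>F. ?q * (if qnorm (x - y) = 0 then 1 else 0))"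
    by (simp add: nu0_eq_sum sum_distrib_left of_nat_sum if_distrib cong: if_cong)
  also have "\<dots> = (\<Sum>x\<in>E. \<Sum>y\<in>F. 1 + T / N * (?q * A x y - B x y))"
    unfolding T_def N_def A_def B_def by (simp only: isotropic_indicator_expansion[OF assms(1,2)])
  also have "\<dots> = of_nat (card E * card F) + T / N * (?q * (\<Sum>x\<in>E. \<Sum>y\<in>F. A x y) - (\<Sum>x\<in>E. \<Sum>y\<in>F. B x y))"
    by (simp add: sum.distrib sum_subtractf sum_distrib_left right_diff_distrib)
  also have "(\<Sum>x\<in>E. \<Sum>y\<in>F. A x y) = (\<Sum>m\<in>S0. expsum E m * cnj (expsum F m))"
    unfolding A_def by (simp only: expsum_mult_cnj sum.swap[of _ S0])
  also have "(\<Sum>x\<in>E. \<Sum>y\<in>F. B x y) = N * of_nat (card (E \<inter> F))"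
    unfolding B_def by (simp add: sum.If_cases Int_def)
  finally show ?thesis .
qed

lemma cnj_fourier_ind_mult:
  fixes E F :: "('a ^ 'n) set"
  shows "cnj (fourier psi (ind E) m) * fourier psi (ind F) m
         = expsum E m * cnj (expsum F m) / (of_nat CARD('a ^ 'n))^2"
  by (simp add: fourier_ind power2_eq_square)

lemma nu0_deviation_eq:
  fixes E F :: "('a ^ 'n) set"
  assumes c: "CHAR('a) > 2" and ev: "even CARD('n)"
  obtains \<tau> :: real
  where "\<tau>^2 = real CARD('a ^ 'n)"
    and "(real (nu0 E F) - (real (card E) * real (card F) - \<tau> * real (card (E \<inter> F))) / real CARD('a))^2
         = (cmod (\<Sum>m\<in>S0. expsum E m * cnj (expsum F m)))^2 / real CARD('a ^ 'n)"
proof -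
  define N where "N = real CARD('a ^ 'n)"
  define q where "q = real CARD('a)"
  define X where "X = real (card E) * real (card F)"
  define I where "I = real (card (E \<inter> F))"
  define nu where "nu = real (nu0 E F)"
  define SP where "SP = (\<Sum>m\<in>S0. expsum E m * cnj (expsum F m))"
  have N_pos: "N > 0" by (simp add: N_def)
  have q3: "q \<ge> 3" unfolding q_def using card_ge_3_if_CHAR_gt_2[OF c] by simp
  obtain \<tau> where T: "(\<Sum>w\<in>(UNIV :: ('a ^ 'n) set). psi (qnorm w)) = of_real \<tau>" and \<tau>: "\<tau>^2 = N"
    using gauss_sum_real[OF c ev] unfolding N_def by blast
  define r where "r = nu - (X - \<tau> * I) / q"
  have id: "of_real q * of_real nu
      = of_real X + of_real \<tau> / of_real N * (of_real q * SP - of_real N * of_real I)"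
    using nu0_identity[OF c ev, of E F] by (simp add: T N_def q_def X_def I_def nu_def SP_def)
  have "of_real \<tau> / of_real N * (of_real q * SP - of_real N * of_real I)
      = of_real q * (of_real \<tau> * SP / of_real N) - of_real (\<tau> * I)"
    using N_pos by (simp add: field_simps)
  with id have "of_real q * (of_real \<tau> * SP / of_real N) = (of_real (q * nu - X + \<tau> * I) :: complex)"
    by (simp add: algebra_simps)
  hence "of_real \<tau> * SP / of_real N = (of_real ((q * nu - X + \<tau> * I) / q) :: complex)"
    using q3 by (simp add: field_simps)
  also have "(q * nu - X + \<tau> * I) / q = r"
    using q3 by (simp add: r_def field_simps)
  finally have SP_r: "of_real \<tau> * SP / of_real N = of_real r" .
  have "\<bar>r\<bar> = \<bar>\<tau>\<bar> * cmod SP / N"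
  proof -
    have "cmod (of_real r) = cmod (of_real \<tau> * SP / of_real N)" by (simp only: SP_r)
    thus ?thesis using N_pos by (simp add: norm_mult norm_divide)
  qed
  hence "r^2 = (\<bar>\<tau>\<bar> * cmod SP / N)^2" by (metis power2_abs)
  also have "\<dots> = \<tau>^2 * (cmod SP)^2 / N^2" by (simp add: power_divide power_mult_distrib)
  also have "\<dots> = (cmod SP)^2 / N" using N_pos by (simp only: \<tau>) (simp add: power2_eq_square)
  finally show ?thesis
    using that \<tau> unfolding r_def N_def q_def X_def I_def nu_def SP_def by blast
qed

lemma norm_sum_S0_fourier_eq:
  fixes E F :: "('a ^ 'n) set"
  shows "real CARD('a) ^ (3 * CARD('n)) *
           (cmod (\<Sum>m\<in>S0. cnj (fourier psi (ind E) m) * fourier psi (ind F) m))^2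
         = (cmod (\<Sum>m\<in>S0. expsum E m * cnj (expsum F m)))^2 / real CARD('a ^ 'n)"
proof -
  define N where "N = real CARD('a ^ 'n)"
  define SP where "SP = (\<Sum>m\<in>S0. expsum E m * cnj (expsum F m))"
  have N_pos: "N > 0" by (simp add: N_def)
  have "(\<Sum>m\<in>S0. cnj (fourier psi (ind E) m) * fourier psi (ind F) m) = SP / of_real (N^2)"
    by (simp add: cnj_fourier_ind_mult SP_def N_def sum_divide_distrib)
  hence "cmod (\<Sum>m\<in>S0. cnj (fourier psi (ind E) m) * fourier psi (ind F) m) = cmod SP / N^2"
    using N_pos by (simp add: norm_divide norm_power)
  moreover have "real CARD('a) ^ (3 * CARD('n)) = N^3"
    by (simp add: N_def power_mult mult.commute)
  ultimately have "real CARD('a) ^ (3 * CARD('n)) *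
           (cmod (\<Sum>m\<in>S0. cnj (fourier psi (ind E) m) * fourier psi (ind F) m))^2
         = N^3 * (cmod SP / N^2)^2"
    by simp
  also have "\<dots> = (cmod SP)^2 / N"
    using N_pos by (simp add: power_divide) (simp add: field_simps eval_nat_numeral)
  finally show ?thesis by (simp only: N_def SP_def)
qed

lemma nu0_estimates:
  fixes E F :: "('a ^ 'n) set"
  assumes c: "CHAR('a) > 2" and ev: "even CARD('n)"
    and size: "real (card E) * real (card F) \<ge> 16 * real CARD('a) ^ CARD('n)"
  shows "(real (card E) * real (card F) - real (nu0 E F))^2
           \<ge> (real (card E))^2 * (real (card F))^2 / 36 \<and>
         real CARD('a) ^ (3 * CARD('n)) *
           (cmod (\<Sum>m\<in>S0. cnj (fourier psi (ind E) m) * fourier psi (ind F) m))^2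
         - (real (nu0 E F))^2
         \<le> (real (card E))^2 * (real (card F))^2 / real CARD('a)"
proof -
  define N where "N = real CARD('a ^ 'n)"
  define q where "q = real CARD('a)"
  define X where "X = real (card E) * real (card F)"
  define I where "I = real (card (E \<inter> F))"
  define nu where "nu = real (nu0 E F)"
  define SP where "SP = (\<Sum>m\<in>S0. expsum E m * cnj (expsum F m))"
  have N_pos: "N > 0" by (simp add: N_def)
  have X: "X \<ge> 0" by (simp add: X_def)
  obtain \<tau> where \<tau>: "\<tau>^2 = N" and dev: "(nu - (X - \<tau> * I) / q)^2 = (cmod SP)^2 / N"
    using nu0_deviation_eq[OF c ev, of E F] unfolding N_def q_def X_def I_def nu_def SP_def by blast
  have "16 * N \<le> X" using size by (simp add: X_def N_def q_def)
  hence NX: "N * X \<le> (X / 4)^2" using mult_right_mono[of "16 * N" X X] X by (simp add: power2_eq_square)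
  have "(cmod SP)^2 \<le> N^2 * X"
    unfolding SP_def N_def X_def by (rule norm_sum_expsum_le)
  hence "(cmod SP)^2 / N \<le> N * X" using N_pos by (simp add: divide_le_eq power2_eq_square mult_ac)
  hence "(nu - (X - \<tau> * I) / q)^2 \<le> (X / 4)^2" using dev NX by simp
  hence dev_le: "\<bar>nu - (X - \<tau> * I) / q\<bar> \<le> X / 4" using X by (simp add: power2_le_iff_abs_le)
  have "I^2 \<le> X"
  proof -
    have "card (E \<inter> F) \<le> card E" "card (E \<inter> F) \<le> card F" by (auto intro: card_mono)
    hence "I * I \<le> real (card E) * real (card F)" unfolding I_def by (intro mult_mono) auto
    thus ?thesis by (simp add: X_def power2_eq_square)
  qed
  hence "(\<tau> * I)^2 \<le> (X / 4)^2"
    using NX N_pos by (simp add: power_mult_distrib \<tau> order_trans[OF mult_left_mono])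
  hence t_le: "\<bar>\<tau> * I\<bar> \<le> X / 4" using X by (simp add: power2_le_iff_abs_le)
  have q3: "q \<ge> 3" unfolding q_def using card_ge_3_if_CHAR_gt_2[OF c] by simp
  note bounds = estimates_from_deviation[OF dev_le t_le q3, unfolded dev]
  show ?thesis
    using bounds norm_sum_S0_fourier_eq[of E F]
    by (simp add: X_def nu_def q_def N_def SP_def power_mult_distrib)
qed

end

definition add_closed :: "'a::monoid_add set \<Rightarrow> bool" where
  "add_closed H \<longleftrightarrow> 0 \<in> H \<and> (\<forall>x\<in>H. \<forall>y\<in>H. x + y \<in> H)"

lemma add_closed_of_nat_mult:
  fixes H :: "'a::semiring_1 set"
  assumes "add_closed H" and "x \<in> H"
  shows "of_nat n * x \<in> H"
  using assms by (induction n) (auto simp: add_closed_def distrib_right)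

text \<open>In positive characteristic \<open>- x = (CHAR - 1) \<cdot> x\<close>, so additively closed sets are subgroups.\<close>
lemma add_closed_diff:
  fixes H :: "'a::{finite,ring_1} set"
  assumes H: "add_closed H" and x: "x \<in> H" and y: "y \<in> H"
  shows "x - y \<in> H"
proof -
  have "CHAR('a) > 0" by (rule finite_imp_CHAR_pos) simp
  hence "of_nat (CHAR('a) - 1) * y + y = 0"
    by (simp add: of_nat_diff algebra_simps)
  hence xy: "x - y = x + of_nat (CHAR('a) - 1) * y" by (simp add: add_eq_0_iff2)
  show ?thesis
    unfolding xy using H x add_closed_of_nat_mult[OF H y] by (simp add: add_closed_def)
qed

lemma of_nat_mod_CHAR: "of_nat (n mod CHAR('a)) = (of_nat n :: 'a::semiring_1)"
proof -
  have "(of_nat n :: 'a) = of_nat (n mod CHAR('a) + CHAR('a) * (n div CHAR('a)))"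
    by (simp only: mod_mult_div_eq)
  also have "\<dots> = of_nat (n mod CHAR('a))"
    by (simp only: of_nat_add of_nat_mult of_nat_CHAR mult_zero_left add_0_right)
  finally show ?thesis by (rule sym)
qed

lemma ex_of_nat_mult_eq_1:
  assumes "prime CHAR('a::comm_ring_1)" and "\<not> CHAR('a) dvd k"
  shows "\<exists>j. of_nat (k * j) = (1::'a)"
proof -
  have k: "k \<noteq> 0" using assms(2) by (metis dvd_0_right)
  have "coprime CHAR('a) k" using assms by (simp add: prime_imp_coprime)
  hence "gcd k CHAR('a) = 1" by (simp add: coprime_iff_gcd_eq_1 gcd.commute)
  moreover obtain x y where "k * x = CHAR('a) * y + gcd k CHAR('a)" using bezout_nat[OF k] by blast
  ultimately have "of_nat (k * x) = (1::'a)" by simp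
  thus ?thesis by blast
qed

lemma of_nat_notin_add_closed:
  fixes H :: "'a::{finite,field} set"
  assumes H: "add_closed H" and "1 \<notin> H" and "0 < d" and "d < CHAR('a)"
  shows "of_nat d \<notin> H"
proof
  assume d: "of_nat d \<in> H"
  have "prime CHAR('a)" by (rule prime_CHAR_semidom) (simp add: finite_imp_CHAR_pos)
  moreover have "\<not> CHAR('a) dvd d" using assms(3,4) by (auto dest: dvd_imp_le)
  ultimately obtain j where "of_nat (d * j) = (1::'a)" using ex_of_nat_mult_eq_1 by blast
  hence "of_nat j * of_nat d = (1::'a)" by (simp add: mult.commute)
  with add_closed_of_nat_mult[OF H d, of j] assms(2) show False by simp
qed

lemma of_nat_residue_unique:
  fixes H :: "'a::{finite,field} set"
  assumes H: "add_closed H" "1 \<notin> H"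
    and "j < CHAR('a)" "k < CHAR('a)" "x - of_nat j \<in> H" "x - of_nat k \<in> H"
  shows "j = k"
proof -
  have False if "a < b" "b < CHAR('a)" "x - of_nat a \<in> H" "x - of_nat b \<in> H" for a b
  proof -
    have "(x - of_nat a) - (x - of_nat b) \<in> H" by (rule add_closed_diff[OF H(1) that(3,4)])
    hence "of_nat (b - a) \<in> H" using that(1) by (simp add: of_nat_diff)
    with of_nat_notin_add_closed[OF H, of "b - a"] that(1,2) show False by simp
  qed
  with assms(3-6) show ?thesis by (metis linorder_neqE_nat)
qed

lemma add_closed_adjoin:
  assumes "add_closed H"
  shows "add_closed {h + of_nat k * x | h k. h \<in> (H :: 'a::semiring_1 set)}"
  unfolding add_closed_def
proof (intro conjI ballI)
  show "0 \<in> {h + of_nat k * x | h k. h \<in> H}"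
    using assms by (auto simp: add_closed_def intro!: exI[of _ 0])
  fix a b assume "a \<in> {h + of_nat k * x | h k. h \<in> H}" "b \<in> {h + of_nat k * x | h k. h \<in> H}"
  then obtain h1 k1 h2 k2 where "a = h1 + of_nat k1 * x" "h1 \<in> H" "b = h2 + of_nat k2 * x" "h2 \<in> H"
    by auto
  with assms show "a + b \<in> {h + of_nat k * x | h k. h \<in> H}"
    by (intro CollectI exI[of _ "h1 + h2"] exI[of _ "k1 + k2"]) (auto simp: add_closed_def algebra_simps)
qed

text \<open>A maximal additively closed set avoiding \<open>1\<close> is a complement of the prime field:
  adjoining any \<open>x \<notin> H\<close> produces \<open>1 = h + k x\<close>, which can be solved for \<open>x\<close> modulo \<open>H\<close>.\<close>
lemma ex_prime_field_complement:
  "\<exists>H :: 'a::{finite,field} set. add_closed H \<and> 1 \<notin> H \<and> (\<forall>x. \<exists>j<CHAR('a). x - of_nat j \<in> H)"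
proof -
  define C where "C = {H :: 'a set. add_closed H \<and> 1 \<notin> H}"
  have "{0} \<in> C" by (simp add: C_def add_closed_def)
  then obtain H where "H \<in> C" and H_max: "\<And>H'. H' \<in> C \<Longrightarrow> card H' \<le> card H"
    using Max_in[of "card ` C"] Max_ge[of "card ` C"] by (metis finite finite_imageI image_iff empty_iff)
  hence H: "add_closed H" "1 \<notin> H" by (auto simp: C_def)
  have "\<exists>j<CHAR('a). x - of_nat j \<in> H" for x
  proof (cases "x \<in> H")
    case True
    then show ?thesis by (intro exI[of _ 0]) (simp add: finite_imp_CHAR_pos)
  next
    case False
    define H' where "H' = {h + of_nat k * x | h k. h \<in> H}"
    have "H \<subset> H'"
    proof
      show "H \<subseteq> H'" unfolding H'_def by (force intro: exI[of _ 0])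
      have "x \<in> H'"
        unfolding H'_def using H(1) by (intro CollectI exI[of _ 0] exI[of _ 1]) (auto simp: add_closed_def)
      with False show "H \<noteq> H'" by auto
    qed
    hence "card H < card H'" by (intro psubset_card_mono) auto
    with add_closed_adjoin[OF H(1)] have "1 \<in> H'" using H_max[of H'] by (force simp: C_def H'_def)
    then obtain h k where hk: "1 = h + of_nat k * x" "h \<in> H" unfolding H'_def by auto
    have "\<not> CHAR('a) dvd k"
    proof
      assume "CHAR('a) dvd k"
      hence "of_nat k = (0::'a)" by (simp add: of_nat_eq_0_iff_char_dvd)
      with hk H(2) show False by simp
    qed
    moreover have "prime CHAR('a)" by (rule prime_CHAR_semidom) (simp add: finite_imp_CHAR_pos)
    ultimately obtain j where j: "of_nat (k * j) = (1::'a)" using ex_of_nat_mult_eq_1 by blast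
    have "of_nat j = of_nat j * h + of_nat (k * j) * x"
      using arg_cong[OF hk(1), of "\<lambda>t. of_nat j * t"] by (simp add: algebra_simps)
    hence xj: "x - of_nat j = 0 - of_nat j * h" using j by (simp add: algebra_simps)
    have "0 \<in> H" using H(1) by (simp add: add_closed_def)
    hence "0 - of_nat j * h \<in> H"
      using add_closed_diff[OF H(1)] add_closed_of_nat_mult[OF H(1) hk(2)] by blast
    hence "x - of_nat (j mod CHAR('a)) \<in> H" by (simp only: of_nat_mod_CHAR xj)
    moreover have "j mod CHAR('a) < CHAR('a)" by (simp add: finite_imp_CHAR_pos)
    ultimately show ?thesis by blast
  qed
  with H show ?thesis by blast
qed

lemma ex_additive_residue_map:
  "\<exists>phi :: 'a::{finite,field} \<Rightarrow> nat.
     (\<forall>x y. phi (x + y) = (phi x + phi y) mod CHAR('a)) \<and> phi 0 = 0 \<and> phi 1 = 1"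
proof -
  obtain H :: "'a set" where H: "add_closed H" "1 \<notin> H"
    and ex: "\<And>x. \<exists>j<CHAR('a). x - of_nat j \<in> H"
    using ex_prime_field_complement[where 'a = 'a] by blast
  define p where "p = CHAR('a)"
  have "prime p" unfolding p_def by (rule prime_CHAR_semidom) (simp add: finite_imp_CHAR_pos)
  hence p1: "p > 1" by (rule prime_gt_1_nat)
  define phi where "phi x = (THE j. j < p \<and> x - of_nat j \<in> H)" for x
  have phi_eq: "phi x = j" if "j < p" "x - of_nat j \<in> H" for x j
    unfolding phi_def
  proof (rule the_equality)
    show "j < p \<and> x - of_nat j \<in> H" using that by simp
    show "k = j" if "k < p \<and> x - of_nat k \<in> H" for k
      using of_nat_residue_unique[OF H, of k j x] \<open>j < p\<close> \<open>x - of_nat j \<in> H\<close> that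
      unfolding p_def by simp
  qed
  have phi: "x - of_nat (phi x) \<in> H" for x
  proof -
    obtain j where "j < p" "x - of_nat j \<in> H" using ex[of x] unfolding p_def by blast
    thus ?thesis using phi_eq by simp
  qed
  have "phi (x + y) = (phi x + phi y) mod p" for x y
  proof (rule phi_eq)
    show "(phi x + phi y) mod p < p" using p1 by simp
    have "(x - of_nat (phi x)) + (y - of_nat (phi y)) \<in> H"
      using phi H(1) by (simp add: add_closed_def)
    thus "x + y - of_nat ((phi x + phi y) mod p) \<in> H"
      by (simp add: p_def of_nat_mod_CHAR algebra_simps)
  qed
  moreover have "phi 0 = 0" "phi 1 = 1"
    using phi_eq[of 0 0] phi_eq[of 1 1] p1 H(1) by (simp_all add: add_closed_def)
  ultimately show ?thesis unfolding p_def by blast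
qed

lemma cis_2pi_div:
  assumes "p > 1"
  shows "cis (2 * pi / real p) ^ p = 1" and "cis (2 * pi / real p) \<noteq> 1"
proof -
  have bij: "bij_betw (\<lambda>k. cis (2 * pi * real k / real p)) {..<p} {z. z ^ p = 1}"
    by (rule Complex.bij_betw_roots_unity) (use assms in simp)
  have "cis (2 * pi * real 1 / real p) \<in> {z. z ^ p = 1}"
    using bij_betwE[OF bij] assms by blast
  thus "cis (2 * pi / real p) ^ p = 1" by simp
  show "cis (2 * pi / real p) \<noteq> 1"
  proof
    assume "cis (2 * pi / real p) = 1"
    hence "cis (2 * pi * real 1 / real p) = cis (2 * pi * real 0 / real p)" by simp
    hence "(1::nat) = 0"
      by (rule inj_onD[OF bij_betw_imp_inj_on[OF bij]]) (use assms in simp_all)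
    thus False by simp
  qed
qed

lemma power_mod_eq_if_power_eq_1:
  fixes w :: "'a::monoid_mult"
  assumes "w ^ p = 1"
  shows "w ^ (m mod p) = w ^ m"
proof -
  have "w ^ m = w ^ (m mod p + p * (m div p))" by (simp only: mod_mult_div_eq)
  also have "\<dots> = w ^ (m mod p)" by (simp only: power_add power_mult assms power_one mult_1_right)
  finally show ?thesis by (rule sym)
qed

lemma ex_add_character: "\<exists>psi :: 'a::{finite,field} \<Rightarrow> complex. add_character psi"
proof -
  obtain phi :: "'a \<Rightarrow> nat" where phi_add: "\<And>x y. phi (x + y) = (phi x + phi y) mod CHAR('a)"
    and phi_0: "phi 0 = 0" and phi_1: "phi 1 = 1"
    using ex_additive_residue_map by blast
  have "prime CHAR('a)" by (rule prime_CHAR_semidom) (simp add: finite_imp_CHAR_pos)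
  hence p1: "CHAR('a) > 1" by (rule prime_gt_1_nat)
  define w where "w = cis (2 * pi / real CHAR('a))"
  have "add_character (\<lambda>x. w ^ phi x)"
  proof
    show "w ^ phi (x + y) = w ^ phi x * w ^ phi y" for x y
      using power_mod_eq_if_power_eq_1[OF cis_2pi_div(1)[OF p1]]
      by (simp add: w_def phi_add power_add)
    show "w ^ phi 0 = 1" by (simp add: phi_0)
    show "\<exists>x. w ^ phi x \<noteq> 1" using cis_2pi_div(2)[OF p1] phi_1 by (auto simp: w_def intro!: exI[of _ 1])
  qed
  thus ?thesis by blast
qed

lemma nontriv_add_char_cases:
  assumes "nontriv_add_char psi"
  shows "add_character psi \<or> psi = (\<lambda>_. 0)"
proof (cases "psi 0 = 1")
  case True
  with assms show ?thesis by (simp add: add_character_def nontriv_add_char_def)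
next
  case False
  have hom: "psi (x + y) = psi x * psi y" for x y using assms by (simp add: nontriv_add_char_def)
  have "psi 0 = psi 0 * psi 0" using hom[of 0 0] by simp
  with False have "psi 0 = 0" by (simp add: mult_cancel_left1)
  hence "psi x = 0" for x using hom[of x 0] by simp
  thus ?thesis by blast
qed

text \<open>The hypothesis \<open>d_ge\<close> is implied by \<open>d_even\<close>. The definition of \<open>nontriv_add_char\<close> also admits
  \<open>psi = (\<lambda>_. 0)\<close>; then all Fourier transforms vanish, and the first estimate, which does not
  involve \<open>psi\<close>, is obtained from a genuine character.\<close>
theorem mainTheorem10:
  fixes psi :: "'a::{finite,field} \<Rightarrow> complex"
    and E F :: "('a ^ 'n) set"
  assumes char: "CHAR('a) > 2"
    and chi: "nontriv_add_char psi"
    and d_even: "even CARD('n)" and d_ge: "CARD('n) \<ge> 2"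
    and size: "real (card E) * real (card F) \<ge> 16 * real CARD('a) ^ CARD('n)"
  shows "(real (card E) * real (card F) - real (nu0 E F))^2
           \<ge> (real (card E))^2 * (real (card F))^2 / 36 \<and>
         real CARD('a) ^ (3 * CARD('n)) *
           (cmod (\<Sum>m\<in>S0. cnj (fourier psi (ind E) m) * fourier psi (ind F) m))^2
         - (real (nu0 E F))^2
         \<le> (real (card E))^2 * (real (card F))^2 / real CARD('a)"
  using nontriv_add_char_cases[OF chi]
proof
  assume "add_character psi"
  then show ?thesis by (rule add_character.nu0_estimates[OF _ char d_even size])
next
  assume zero: "psi = (\<lambda>_. 0)"
  obtain psi' :: "'a \<Rightarrow> complex" where "add_character psi'" using ex_add_character by blast
  hence "(real (card E) * real (card F) - real (nu0 E F))^2 \<ge> (real (card E))^2 * (real (card F))^2 / 36"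
    using add_character.nu0_estimates[OF _ char d_even size] by blast
  moreover have "real CARD('a) ^ (3 * CARD('n)) *
           (cmod (\<Sum>m\<in>S0. cnj (fourier psi (ind E) m) * fourier psi (ind F) m))^2 = 0"
    by (simp add: zero fourier_def)
  moreover have "0 \<le> (real (card E))^2 * (real (card F))^2 / real CARD('a)" by simp
  ultimately show ?thesis using zero_le_power2[of "real (nu0 E F)"] by linarith
qed

end
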